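(* Let $x_0\ge x_1\ge\cdots\ge x_t$ be a non-increasing sequence of reals and let $f$ be a nonnegative, non-decreasing, continuously differentiable function on $[x_t,x_0]$ such that $x_n-x_{n+1}\ge f(x_{n+1})$ for all $n=0,1,\dots,t-1$. Then $\ln\frac{f(x_0)}{f(x_t)}+\int_{x_t}^{x_0}\frac{1}{f(x)}\,dx\ge t$. *)

theory Defs
  imports "HOL-Analysis.Analysis"
begin

end

theory Submission
  imports Defs
begin

text \<open>
  The quantity \<open>\<Phi>(a, b) = ln (f b / f a) + \<integral>\<^sub>a\<^sup>b 1/f\<close> is additive over adjacent intervals,
  so it suffices that each step contributes at least 1. On a step \<open>[a, b]\<close> with \<open>b - a \<ge> f a\<close>,
  monotonicity of \<open>f\<close> bounds the integral below by \<open>(b - a) / f b \<ge> r\<close>, where \<open>r = f a / f b\<close>,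
  while the logarithm equals \<open>-ln r \<ge> 1 - r\<close>.
\<close>

definition log_integral_potential :: "(real \<Rightarrow> real) \<Rightarrow> real \<Rightarrow> real \<Rightarrow> real" where
  "log_integral_potential f a b = ln (f b / f a) + integral {a..b} (\<lambda>y. 1 / f y)"

lemma mono_on_pos_on_atLeastAtMost:
  fixes f :: "real \<Rightarrow> real"
  assumes "mono_on {a..b} f" "f a > 0" "y \<in> {a..b}"
  shows "f y > 0"
  using assms mono_onD[of "{a..b}" f a y] by fastforce

lemma inverse_integrable_on_mono_on:
  fixes f :: "real \<Rightarrow> real"
  assumes mono: "mono_on {a..b} f" and pos: "f a > 0"
  shows "(\<lambda>y. 1 / f y) integrable_on {a..b}"
proof -
  have "mono_on {a..b} (\<lambda>y. - (1 / f y))"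
  proof (rule mono_onI)
    fix r s assume "r \<in> {a..b}" "s \<in> {a..b}" "r \<le> s"
    then show "- (1 / f r) \<le> - (1 / f s)"
      using mono mono_on_pos_on_atLeastAtMost[OF mono pos] by (simp add: frac_le mono_onD)
  qed
  then have "(\<lambda>y. - (1 / f y)) integrable_on {a..b}"
    by (rule integrable_on_mono_on)
  then show ?thesis
    using integrable_neg by fastforce
qed

lemma log_integral_potential_add:
  fixes f :: "real \<Rightarrow> real"
  assumes "a \<le> b" "b \<le> c" and mono: "mono_on {a..c} f" and pos: "f a > 0"
  shows "log_integral_potential f a c = log_integral_potential f a b + log_integral_potential f b c"
proof -
  have "f b > 0" "f c > 0"
    using assms mono_on_pos_on_atLeastAtMost by auto
  then have "ln (f c / f a) = ln (f b / f a) + ln (f c / f b)"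
    using pos by (simp add: ln_div)
  moreover have "integral {a..c} (\<lambda>y. 1 / f y)
      = integral {a..b} (\<lambda>y. 1 / f y) + integral {b..c} (\<lambda>y. 1 / f y)"
    using Henstock_Kurzweil_Integration.integral_combine[OF assms(1,2) inverse_integrable_on_mono_on[OF mono pos]] by simp
  ultimately show ?thesis
    unfolding log_integral_potential_def by simp
qed

lemma log_integral_potential_step_ge_one:
  fixes f :: "real \<Rightarrow> real"
  assumes mono: "mono_on {a..b} f" and pos: "f a > 0" and step: "f a \<le> b - a"
  shows "log_integral_potential f a b \<ge> 1"
proof -
  have "a \<le> b"
    using pos step by simp
  then have fb: "f b > 0"
    using mono pos mono_on_pos_on_atLeastAtMost by auto
  define r where "r = f a / f b"
  have r: "r > 0"
    using pos fb by (simp add: r_def)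
  have "ln (f b / f a) = - ln r"
    using pos fb by (simp add: r_def ln_div)
  also have "\<dots> \<ge> 1 - r"
    using ln_le_minus_one[OF r] by simp
  finally have ln_ge: "ln (f b / f a) \<ge> 1 - r" .
  have "r \<le> (b - a) / f b"
    using step fb by (simp add: r_def divide_right_mono)
  also have "\<dots> = integral {a..b} (\<lambda>y. 1 / f b)"
    using \<open>a \<le> b\<close> by simp
  also have "\<dots> \<le> integral {a..b} (\<lambda>y. 1 / f y)"
  proof (rule integral_le)
    show "(\<lambda>y. 1 / f y) integrable_on {a..b}"
      using mono pos by (rule inverse_integrable_on_mono_on)
    show "1 / f b \<le> 1 / f y" if "y \<in> {a..b}" for y
      using that mono_onD[OF mono, of y b] mono_on_pos_on_atLeastAtMost[OF mono pos that] \<open>a \<le> b\<close>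
      by (simp add: frac_le)
  qed (simp_all add: integrable_const_ivl)
  finally show ?thesis
    using ln_ge unfolding log_integral_potential_def by simp
qed

lemma chain_antimono:
  fixes x :: "nat \<Rightarrow> 'a::preorder"
  assumes "\<And>n. n < t \<Longrightarrow> x (Suc n) \<le> x n" "i \<le> j" "j \<le> t"
  shows "x j \<le> x i"
  using assms(2,3)
proof (induction j rule: dec_induct)
  case (step j)
  have "x (Suc j) \<le> x j"
    using assms(1) step.prems by simp
  with step.IH step.prems show ?case
    by (meson Suc_leD order_trans)
qed simp

lemma log_integral_potential_chain_ge:
  fixes x :: "nat \<Rightarrow> real" and f :: "real \<Rightarrow> real"
  assumes noninc: "\<And>n. n < t \<Longrightarrow> x (Suc n) \<le> x n"
    and mono: "mono_on {x t..x 0} f" and pos: "f (x t) > 0"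
    and step: "\<And>n. n < t \<Longrightarrow> x n - x (Suc n) \<ge> f (x (Suc n))"
  shows "log_integral_potential f (x t) (x 0) \<ge> real t"
proof -
  have "log_integral_potential f (x m) (x 0) \<ge> real m" if "m \<le> t" for m
    using that
  proof (induction m)
    case 0
    then show ?case
      by (simp add: log_integral_potential_def)
  next
    case (Suc m)
    have bounds: "x t \<le> x (Suc m)" "x (Suc m) \<le> x m" "x m \<le> x 0"
      using Suc.prems chain_antimono[of t x, OF noninc] by auto
    have mono': "mono_on {x (Suc m)..x 0} f"
      using mono bounds by (auto intro: mono_on_subset)
    have pos': "f (x (Suc m)) > 0"
      using mono pos bounds order_trans[OF bounds(2,3)]
      by (auto intro: mono_on_pos_on_atLeastAtMost)
    have "log_integral_potential f (x (Suc m)) (x m) \<ge> 1"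
      using mono' bounds pos' step[of m] Suc.prems
      by (intro log_integral_potential_step_ge_one) (auto intro: mono_on_subset)
    then show ?case
      using log_integral_potential_add[OF bounds(2,3) mono' pos'] Suc by simp
  qed
  then show ?thesis
    by simp
qed

text \<open>Only monotonicity and \<open>f (x t) > 0\<close> are needed: \<open>1/f\<close> is then monotone, hence integrable.\<close>

theorem mainTheorem9:
  fixes x :: "nat \<Rightarrow> real" and t :: nat and f :: "real \<Rightarrow> real"
  assumes noninc: "\<And>n. n < t \<Longrightarrow> x (Suc n) \<le> x n"
    and nonneg: "\<And>y. y \<in> {x t..x 0} \<Longrightarrow> f y \<ge> 0"
    and pos_end: "f (x t) > 0"
    and mono: "mono_on {x t..x 0} f"
    and C1: "\<exists>f'. (\<forall>y\<in>{x t..x 0}. (f has_real_derivative f' y) (at y within {x t..x 0}))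
                   \<and> continuous_on {x t..x 0} f'"
    and step: "\<And>n. n < t \<Longrightarrow> x n - x (Suc n) \<ge> f (x (Suc n))"
  shows "ln (f (x 0) / f (x t)) + integral {x t..x 0} (\<lambda>y. 1 / f y) \<ge> real t"
  using log_integral_potential_chain_ge[OF noninc mono pos_end step]
  unfolding log_integral_potential_def .

end
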